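(* Let $w,n$ be positive integers with $w\le n$ such that $r:=\binom{n}{w}/\lfloor n/w\rfloor$ is an even integer. Let $a$ be the remainder of $n$ divided by $w$ and suppose $2a<w$. Suppose that there exists a $2$-good almost-regular edge-coloring of $K_n^w$. Then there exists a $\mathrm{TOC}_3(n,2w-1,w)$.
   Context: $\mathcal{H}_q(n,w)$ is the set of all words of length $n$ over $\mathbb{Z}_q$ with exactly $w$ nonzero entries, with the Hamming distance. An $(n,d,w)_q$-code is a nonempty subset of $\mathcal{H}_q(n,w)$ in which any two distinct words have Hamming distance at least $d$; $A_q(n,d,w)$ is the maximum size of such a code, and a code of this size is optimal. A $\mathrm{TOC}_q(n,d,w)$ is a partition of $\mathcal{H}_q(n,w)$ into optimal $(n,d,w)_q$-codes. $K_n^w$ is the complete $w$-uniform hypergraph on vertex set $[n]$. A sub-hypergraph with vertex set $[n]$ is almost-regular if the degrees of any two vertices differ by at most one. Suppose $g\mid r$ where $r=\binom{n}{w}/\lfloor n/w\rfloor$. An almost-regular edge-coloring $\{\mathcal{F}_{i,j}:1\le i\le r/g,\,1\le j\le g\}$ of $K_n^w$ is a partition of the edges of $K_n^w$ into classes $\mathcal{F}_{i,j}$, each an almost-regular sub-hypergraph (on vertex set $[n]$) with exactly $\lfloor n/w\rfloor$ edges. It is $g$-good if for each $i$ the union $\mathcal{A}_i=\bigcup_{j=1}^g\mathcal{F}_{i,j}$ is the block set of a packing $\mathrm{P}(2,w,n)$, i.e. every pair of elements of $[n]$ is contained in at most one edge of $\mathcal{A}_i$. *)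

theory Defs
  imports Main "HOL-Library.Disjoint_Sets"
begin

text \<open>Words of length n over Z_q are functions nat => nat, supported on {0..<n},
  with values in {0..<q}; the zero symbol is 0.\<close>

definition hamming :: "nat \<Rightarrow> (nat \<Rightarrow> nat) \<Rightarrow> (nat \<Rightarrow> nat) \<Rightarrow> nat" where
  "hamming n x y = card {i. i < n \<and> x i \<noteq> y i}"

definition Hq :: "nat \<Rightarrow> nat \<Rightarrow> nat \<Rightarrow> (nat \<Rightarrow> nat) set" where
  "Hq q n w = {x. (\<forall>i. n \<le> i \<longrightarrow> x i = 0) \<and> (\<forall>i<n. x i < q)
                 \<and> card {i. i < n \<and> x i \<noteq> 0} = w}"

definition is_code :: "nat \<Rightarrow> nat \<Rightarrow> nat \<Rightarrow> nat \<Rightarrow> (nat \<Rightarrow> nat) set \<Rightarrow> bool" where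
  "is_code q n d w C \<longleftrightarrow> C \<noteq> {} \<and> C \<subseteq> Hq q n w \<and>
     (\<forall>x\<in>C. \<forall>y\<in>C. x \<noteq> y \<longrightarrow> d \<le> hamming n x y)"

definition Aq :: "nat \<Rightarrow> nat \<Rightarrow> nat \<Rightarrow> nat \<Rightarrow> nat" where
  "Aq q n d w = Max {card C | C. is_code q n d w C}"

definition optimal_code :: "nat \<Rightarrow> nat \<Rightarrow> nat \<Rightarrow> nat \<Rightarrow> (nat \<Rightarrow> nat) set \<Rightarrow> bool" where
  "optimal_code q n d w C \<longleftrightarrow> is_code q n d w C \<and> card C = Aq q n d w"

definition is_TOC :: "nat \<Rightarrow> nat \<Rightarrow> nat \<Rightarrow> nat \<Rightarrow> (nat \<Rightarrow> nat) set set \<Rightarrow> bool" where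
  "is_TOC q n d w P \<longleftrightarrow> partition_on (Hq q n w) P \<and> (\<forall>C\<in>P. optimal_code q n d w C)"

definition complete_hypergraph :: "nat \<Rightarrow> nat \<Rightarrow> nat set set" where
  "complete_hypergraph n w = {e. e \<subseteq> {0..<n} \<and> card e = w}"

definition hdegree :: "nat set set \<Rightarrow> nat \<Rightarrow> nat" where
  "hdegree F v = card {e\<in>F. v \<in> e}"

definition almost_regular :: "nat \<Rightarrow> nat set set \<Rightarrow> bool" where
  "almost_regular n F \<longleftrightarrow>
     (\<forall>u<n. \<forall>v<n. hdegree F u \<le> hdegree F v + 1)"

definition is_packing2 :: "nat \<Rightarrow> nat set set \<Rightarrow> bool" where
  "is_packing2 n A \<longleftrightarrow>
     (\<forall>x<n. \<forall>y<n. x \<noteq> y \<longrightarrow> card {e\<in>A. x \<in> e \<and> y \<in> e} \<le> 1)"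

definition almost_regular_coloring ::
    "nat \<Rightarrow> nat \<Rightarrow> nat \<Rightarrow> (nat \<Rightarrow> nat \<Rightarrow> nat set set) \<Rightarrow> bool" where
  "almost_regular_coloring n w g F \<longleftrightarrow>
     (let r = (n choose w) div (n div w);
          I = {1..r div g} \<times> {1..g} in
      (\<Union>(i,j)\<in>I. F i j) = complete_hypergraph n w \<and>
      (\<forall>(i,j)\<in>I. \<forall>(i',j')\<in>I. (i,j) \<noteq> (i',j') \<longrightarrow> F i j \<inter> F i' j' = {}) \<and>
      (\<forall>(i,j)\<in>I. card (F i j) = n div w \<and> almost_regular n (F i j)))"

definition good_coloring ::
    "nat \<Rightarrow> nat \<Rightarrow> nat \<Rightarrow> (nat \<Rightarrow> nat \<Rightarrow> nat set set) \<Rightarrow> bool" where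
  "good_coloring n w g F \<longleftrightarrow>
     almost_regular_coloring n w g F \<and>
     (\<forall>i\<in>{1..((n choose w) div (n div w)) div g}.
        is_packing2 n (\<Union>j\<in>{1..g}. F i j))"

end

theory Submission
  imports Defs "HOL-Combinatorics.Transposition" "HOL-Library.FuncSet"
begin

(* Let m = n div w. In a (n, 2w-1, w)_3 code two codewords with the same nonzero symbol in some
   coordinate are at distance at most 2w-2, so every coordinate is nonzero in at most two
   codewords; hence w |C| <= 2n, and |C| <= 2m because 2 (n mod w) < w.
   Conversely, fix a class i of the 2-good colouring. Each F i j has m edges of size w and is
   almost regular, so its degree sum is at most n and it is a matching. The points of [n] are then
   the edges of a bipartite multigraph between F i 1 and F i 2 of maximum degree w, and Koenig's
   edge-colouring theorem gives pi_i : [n] -> {0..<w} bijective on every edge. For each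
   k : {0..<w} -> {1,2}, writing k o pi_i on the edges of F i 1 and 3 - k o pi_i on those of F i 2
   gives 2m words; the supports of two of them meet in at most one point (packing), where the
   symbols differ, so their distance is at least 2w-1. These optimal codes partition H_3(n,w). *)

section \<open>Degrees and packings\<close>

lemma sum_card_filter_swap:
  assumes "finite A" "finite B"
  shows "(\<Sum>x\<in>A. card {y\<in>B. P x y}) = (\<Sum>y\<in>B. card {x\<in>A. P x y})"
proof -
  have "(\<Sum>x\<in>A. card {y\<in>B. P x y}) = (\<Sum>x\<in>A. \<Sum>y\<in>B. if P x y then 1 else 0)"
    using assms by (simp add: sum.If_cases Int_def)
  also have "\<dots> = (\<Sum>y\<in>B. \<Sum>x\<in>A. if P x y then 1 else 0)"
    by (rule sum.swap)
  also have "\<dots> = (\<Sum>y\<in>B. card {x\<in>A. P x y})"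
    using assms by (simp add: sum.If_cases Int_def)
  finally show ?thesis .
qed

lemma sum_hdegree:
  assumes "finite F" and edges: "\<And>e. e \<in> F \<Longrightarrow> e \<subseteq> {0..<n} \<and> card e = w"
  shows "(\<Sum>v<n. hdegree F v) = card F * w"
proof -
  have "(\<Sum>v<n. hdegree F v) = (\<Sum>e\<in>F. card {v\<in>{..<n}. v \<in> e})"
    unfolding hdegree_def using sum_card_filter_swap[OF finite_lessThan \<open>finite F\<close>] by simp
  also have "\<dots> = (\<Sum>e\<in>F. w)"
  proof (rule sum.cong)
    fix e assume "e \<in> F"
    then have "{v\<in>{..<n}. v \<in> e} = e" and "card e = w" using edges by fastforce+
    then show "card {v\<in>{..<n}. v \<in> e} = w" by simp
  qed simp
  finally show ?thesis by simp
qed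

lemma almost_regular_disjoint:
  assumes edges: "\<And>e. e \<in> F \<Longrightarrow> e \<subseteq> {0..<n} \<and> card e = w"
    and "card F * w \<le> n" and regular: "almost_regular n F"
  shows "disjoint F"
proof (rule disjointI, rule ccontr)
  fix e e' assume e: "e \<in> F" "e' \<in> F" "e \<noteq> e'" "e \<inter> e' \<noteq> {}"
  then obtain v where v: "v \<in> e" "v \<in> e'" by blast
  have "finite F" using edges by (intro finite_subset[of F "Pow {0..<n}"]) auto
  have "v < n" using edges[OF e(1)] v by auto
  have "card {e, e'} \<le> hdegree F v"
    unfolding hdegree_def using e v \<open>finite F\<close> by (intro card_mono) auto
  then have "1 < hdegree F v" using e(3) by simp
  then have "1 \<le> hdegree F u" if "u < n" for u
    using regular \<open>v < n\<close> that unfolding almost_regular_def by fastforce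
  then have "(\<Sum>u<n. 1) < (\<Sum>u<n. hdegree F u)"
    using \<open>1 < hdegree F v\<close> \<open>v < n\<close> by (intro sum_strict_mono_ex1) auto
  then show False using sum_hdegree[OF \<open>finite F\<close> edges] \<open>card F * w \<le> n\<close> by simp
qed

lemma packing_card_Int_le_1:
  assumes "is_packing2 n A" "finite A" "e \<in> A" "e' \<in> A" "e \<noteq> e'" "e \<subseteq> {0..<n}"
  shows "card (e \<inter> e') \<le> 1"
proof (rule ccontr)
  assume "\<not> card (e \<inter> e') \<le> 1"
  then obtain x y where xy: "x \<in> e \<inter> e'" "y \<in> e \<inter> e'" "x \<noteq> y"
    by (metis One_nat_def card_le_Suc0_iff_eq finite_Int le_refl card.infinite zero_le_one)
  then have "x < n" "y < n" using assms(6) by auto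
  then have "card {g\<in>A. x \<in> g \<and> y \<in> g} \<le> 1"
    using assms(1) xy(3) unfolding is_packing2_def by blast
  then show False
    using xy assms(2-5) by (auto simp: card_le_Suc0_iff_eq)
qed

section \<open>Codes of minimum distance 2w - 1\<close>

lemma support_Hq:
  assumes "x \<in> Hq q n w"
  shows "card {i. i < n \<and> x i \<noteq> 0} = w" and "i < n \<Longrightarrow> x i < q" and "n \<le> i \<Longrightarrow> x i = 0"
  using assms unfolding Hq_def by auto

lemma hamming_le_if_common_nonzero:
  assumes "x \<in> Hq q n w" "y \<in> Hq q n w" "i < n" "x i = y i" "x i \<noteq> 0"
  shows "hamming n x y \<le> 2 * w - 2"
proof -
  define Sx where "Sx = {j. j < n \<and> x j \<noteq> 0}"
  define Sy where "Sy = {j. j < n \<and> y j \<noteq> 0}"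
  have fin: "finite Sx" "finite Sy" unfolding Sx_def Sy_def by auto
  have "i \<in> Sx \<inter> Sy" using assms(3-5) unfolding Sx_def Sy_def by auto
  then have "1 \<le> card (Sx \<inter> Sy)" using fin by (auto simp: Suc_le_eq card_gt_0_iff)
  then have "card (Sx \<union> Sy) \<le> 2 * w - 1"
    using card_Un_Int[OF fin] support_Hq(1)[OF assms(1)] support_Hq(1)[OF assms(2)]
    unfolding Sx_def Sy_def by linarith
  moreover have "{j. j < n \<and> x j \<noteq> y j} \<subseteq> (Sx \<union> Sy) - {i}"
    using assms(4) unfolding Sx_def Sy_def by auto
  then have "hamming n x y \<le> card ((Sx \<union> Sy) - {i})"
    unfolding hamming_def using fin by (intro card_mono) auto
  ultimately show ?thesis using \<open>i \<in> Sx \<inter> Sy\<close> fin by simp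
qed

lemma card_code_coordinate_le:
  assumes code: "is_code q n (2 * w - 1) w C" and "0 < w" and "i < n"
  shows "card {x\<in>C. x i \<noteq> 0} \<le> q - 1"
proof -
  have "inj_on (\<lambda>x. x i) {x\<in>C. x i \<noteq> 0}"
  proof (rule inj_onI, rule ccontr)
    fix x y assume xy: "x \<in> {x\<in>C. x i \<noteq> 0}" "y \<in> {x\<in>C. x i \<noteq> 0}" "x i = y i" "x \<noteq> y"
    then have "2 * w - 1 \<le> hamming n x y" and "x \<in> Hq q n w" "y \<in> Hq q n w"
      using code unfolding is_code_def by auto
    then show False using hamming_le_if_common_nonzero[of x q n w y i] xy \<open>i < n\<close> \<open>0 < w\<close> by simp
  qed
  moreover have "(\<lambda>x. x i) ` {x\<in>C. x i \<noteq> 0} \<subseteq> {1..<q}"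
    using code support_Hq(2)[of _ q n w i] \<open>i < n\<close> unfolding is_code_def by force
  ultimately show ?thesis using card_inj_on_le[of _ _ "{1..<q}"] by fastforce
qed

lemma card_code_le:
  assumes code: "is_code q n (2 * w - 1) w C" and "0 < w"
  shows "w * card C \<le> (q - 1) * n"
proof (cases "finite C")
  case True
  have "card {i\<in>{..<n}. x i \<noteq> 0} = w" if "x \<in> C" for x
    using code support_Hq(1)[of x q n w] that unfolding is_code_def by auto
  then have "w * card C = (\<Sum>x\<in>C. card {i\<in>{..<n}. x i \<noteq> 0})"
    by simp
  also have "\<dots> = (\<Sum>i<n. card {x\<in>C. x i \<noteq> 0})"
    by (rule sum_card_filter_swap[OF True finite_lessThan])
  also have "\<dots> \<le> (\<Sum>i<n. q - 1)"
    using card_code_coordinate_le[OF assms] by (intro sum_mono) simp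
  finally show ?thesis by (simp add: mult.commute)
qed simp

lemma Aq_eqI:
  assumes "is_code q n d w C" and "\<And>C'. is_code q n d w C' \<Longrightarrow> card C' \<le> card C"
  shows "Aq q n d w = card C"
  unfolding Aq_def
proof (rule Max_eqI)
  have "{card C |C. is_code q n d w C} \<subseteq> {..card C}" using assms(2) by auto
  then show "finite {card C |C. is_code q n d w C}" by (rule finite_subset) simp
qed (use assms in auto)

section \<open>Rainbow colourings of two matchings\<close>

definition rainbow_coloring_on :: "'a set set \<Rightarrow> nat \<Rightarrow> 'a set \<Rightarrow> ('a \<Rightarrow> nat) \<Rightarrow> bool" where
  "rainbow_coloring_on E w Q \<pi> \<longleftrightarrow> (\<forall>g\<in>E. inj_on \<pi> (g \<inter> Q) \<and> \<pi> ` (g \<inter> Q) \<subseteq> {..<w})"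

lemma rainbow_coloring_on_empty: "rainbow_coloring_on E w {} \<pi>"
  by (simp add: rainbow_coloring_on_def)

lemma rainbow_coloring_on_insert:
  assumes col: "rainbow_coloring_on E w Q \<pi>" and "c < w" and "p \<notin> Q"
    and missing: "\<And>g. g \<in> E \<Longrightarrow> p \<in> g \<Longrightarrow> c \<notin> \<pi> ` (g \<inter> Q)"
  shows "rainbow_coloring_on E w (insert p Q) (\<pi>(p := c))"
  unfolding rainbow_coloring_on_def
proof
  fix g assume g: "g \<in> E"
  have "inj_on (\<pi>(p := c)) (g \<inter> Q) = inj_on \<pi> (g \<inter> Q)" and "(\<pi>(p := c)) ` (g \<inter> Q) = \<pi> ` (g \<inter> Q)"
    using \<open>p \<notin> Q\<close> by (auto intro!: inj_on_cong)
  moreover have "g \<inter> insert p Q = (if p \<in> g then insert p (g \<inter> Q) else g \<inter> Q)"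
    by auto
  ultimately show "inj_on (\<pi>(p := c)) (g \<inter> insert p Q) \<and> (\<pi>(p := c)) ` (g \<inter> insert p Q) \<subseteq> {..<w}"
    using col g missing[OF g] \<open>c < w\<close> \<open>p \<notin> Q\<close>
    by (auto simp: rainbow_coloring_on_def inj_on_insert)
qed

lemma rainbow_coloring_on_transpose:
  assumes col: "rainbow_coloring_on E w Q \<pi>" and "\<alpha> < w" and "\<beta> < w"
    and closed: "\<And>g a b. g \<in> E \<Longrightarrow> a \<in> g \<inter> Q \<Longrightarrow> b \<in> g \<inter> Q \<Longrightarrow> a \<in> S \<Longrightarrow>
                   \<pi> a \<in> {\<alpha>, \<beta>} \<Longrightarrow> \<pi> b \<in> {\<alpha>, \<beta>} \<Longrightarrow> b \<in> S"
  shows "rainbow_coloring_on E w Q (\<lambda>q. if q \<in> S then transpose \<alpha> \<beta> (\<pi> q) else \<pi> q)"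
  unfolding rainbow_coloring_on_def
proof (intro ballI conjI)
  fix g assume g: "g \<in> E"
  let ?\<pi>' = "\<lambda>q. if q \<in> S then transpose \<alpha> \<beta> (\<pi> q) else \<pi> q"
  have inj: "inj_on \<pi> (g \<inter> Q)" and "\<pi> ` (g \<inter> Q) \<subseteq> {..<w}"
    using col g by (auto simp: rainbow_coloring_on_def)
  then show "?\<pi>' ` (g \<inter> Q) \<subseteq> {..<w}"
    using \<open>\<alpha> < w\<close> \<open>\<beta> < w\<close> by (auto simp: transpose_def)
  have mixed: False if "a \<in> g \<inter> Q" "b \<in> g \<inter> Q" "a \<in> S" "b \<notin> S" "transpose \<alpha> \<beta> (\<pi> a) = \<pi> b" for a b
  proof (cases "\<pi> a \<in> {\<alpha>, \<beta>}")
    case True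
    then have "\<pi> b \<in> {\<alpha>, \<beta>}" using that(5) by (auto simp: transpose_eq_iff)
    then show False using closed[OF g that(1-3) True] that(4) by blast
  next
    case False
    then have "a = b" using that(1,2,5) inj by (auto simp: inj_on_def)
    then show False using that(3,4) by blast
  qed
  show "inj_on ?\<pi>' (g \<inter> Q)"
  proof (rule inj_onI)
    fix a b assume ab: "a \<in> g \<inter> Q" "b \<in> g \<inter> Q" "?\<pi>' a = ?\<pi>' b"
    then consider "a \<in> S \<longleftrightarrow> b \<in> S" "\<pi> a = \<pi> b" | "a \<in> S" "b \<notin> S" | "a \<notin> S" "b \<in> S"
      by (auto dest: transpose_eq_imp_eq split: if_splits)
    then show "a = b"
      using ab inj mixed mixed[of b a] by cases (auto simp: inj_on_def split: if_splits)
  qed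
qed

lemma disjoint_member_unique: "disjoint E \<Longrightarrow> e \<in> E \<Longrightarrow> e' \<in> E \<Longrightarrow> x \<in> e \<Longrightarrow> x \<in> e' \<Longrightarrow> e = e'"
  using disjointD by blast

lemma exists_missing_color:
  assumes "disjoint E" and edges: "\<And>g. g \<in> E \<Longrightarrow> finite g \<and> card g \<le> w" and "0 < w" and "p \<notin> Q"
  shows "\<exists>c<w. \<forall>g\<in>E. p \<in> g \<longrightarrow> c \<notin> \<pi> ` (g \<inter> Q)"
proof (cases "\<exists>g\<in>E. p \<in> g")
  case True
  then obtain g where g: "g \<in> E" "p \<in> g" by blast
  have "card (\<pi> ` (g \<inter> Q)) \<le> card (g - {p})"
    using edges[OF g(1)] \<open>p \<notin> Q\<close> by (intro card_image_le[THEN order_trans] card_mono) auto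
  also have "\<dots> < w" using edges[OF g(1)] g(2) card_gt_0_iff[of g] by fastforce
  finally have "\<not> {..<w} \<subseteq> \<pi> ` (g \<inter> Q)"
    using edges[OF g(1)] by (metis card_lessThan card_mono finite_Int finite_imageI leD)
  then obtain c where "c < w" "c \<notin> \<pi> ` (g \<inter> Q)" by auto
  then show ?thesis using disjoint_member_unique[OF \<open>disjoint E\<close> _ g(1) _ g(2)] by blast
next
  case False
  then show ?thesis using \<open>0 < w\<close> by blast
qed

(* The point p is uncoloured, \<alpha> is free at its E1-edge and \<beta> at its E2-edge f, but \<alpha> is
   used at q\<^sub>1 in f. Swapping \<alpha> and \<beta> along the alternating path ending at q\<^sub>1 frees \<alpha> at f,
   and the path cannot meet the E1-edge of p: it could only enter it at a \<beta>-coloured point, whose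
   successor would be an \<alpha>-coloured point of that same edge. *)
locale kempe_chain =
  fixes E1 E2 :: "'a set set" and w :: nat and Q :: "'a set" and \<pi> :: "'a \<Rightarrow> nat"
    and p q\<^sub>1 :: 'a and f :: "'a set" and \<alpha> \<beta> :: nat
  assumes disjoint1: "disjoint E1" and disjoint2: "disjoint E2"
    and col: "rainbow_coloring_on (E1 \<union> E2) w Q \<pi>" and \<alpha>_less: "\<alpha> < w" and \<beta>_less: "\<beta> < w"
    and \<alpha>_missing: "\<And>g. g \<in> E1 \<Longrightarrow> p \<in> g \<Longrightarrow> \<alpha> \<notin> \<pi> ` (g \<inter> Q)"
    and \<beta>_missing: "\<And>g. g \<in> E2 \<Longrightarrow> p \<in> g \<Longrightarrow> \<beta> \<notin> \<pi> ` (g \<inter> Q)"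
    and f: "f \<in> E2" "p \<in> f" "q\<^sub>1 \<in> f \<inter> Q" "\<pi> q\<^sub>1 = \<alpha>"
begin

definition chain_succ :: "'a \<Rightarrow> 'a \<Rightarrow> bool" where
  "chain_succ a b \<longleftrightarrow> a \<in> Q \<and> b \<in> Q \<and>
     (\<pi> a = \<alpha> \<and> \<pi> b = \<beta> \<and> (\<exists>g\<in>E2. a \<in> g \<and> b \<in> g) \<or>
      \<pi> a = \<beta> \<and> \<pi> b = \<alpha> \<and> (\<exists>g\<in>E1. a \<in> g \<and> b \<in> g))"

definition chain :: "'a set" where
  "chain = {a. chain_succ\<^sup>*\<^sup>* a q\<^sub>1}"

definition recolored :: "'a \<Rightarrow> nat" where
  "recolored q = (if q \<in> chain then transpose \<alpha> \<beta> (\<pi> q) else \<pi> q)"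

lemma \<alpha>_ne_\<beta>: "\<alpha> \<noteq> \<beta>"
  using \<beta>_missing[OF f(1,2)] f(3,4) by blast

lemma same_edge_same_color:
  assumes "g \<in> E1 \<union> E2" "a \<in> g \<inter> Q" "b \<in> g \<inter> Q" "\<pi> a = \<pi> b"
  shows "a = b"
  using col assms by (auto simp: rainbow_coloring_on_def inj_on_def)

lemma chain_succ_unique:
  assumes ab: "chain_succ a b" and ab': "chain_succ a b'"
  shows "b = b'"
proof (cases "\<pi> a = \<alpha>")
  case True
  then obtain g g' where "g \<in> E2" "a \<in> g" "b \<in> g \<inter> Q" "g' \<in> E2" "a \<in> g'" "b' \<in> g' \<inter> Q"
      and "\<pi> b = \<pi> b'"
    using ab ab' \<alpha>_ne_\<beta> unfolding chain_succ_def by auto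
  moreover from this have "g = g'" by (intro disjoint_member_unique[OF disjoint2])
  ultimately show ?thesis using same_edge_same_color[of g b b'] by blast
next
  case False
  then obtain g g' where "g \<in> E1" "a \<in> g" "b \<in> g \<inter> Q" "g' \<in> E1" "a \<in> g'" "b' \<in> g' \<inter> Q"
      and "\<pi> b = \<pi> b'"
    using ab ab' unfolding chain_succ_def by auto
  moreover from this have "g = g'" by (intro disjoint_member_unique[OF disjoint1])
  ultimately show ?thesis using same_edge_same_color[of g b b'] by blast
qed

lemma no_chain_succ_q\<^sub>1: "\<not> chain_succ q\<^sub>1 b"
proof
  assume "chain_succ q\<^sub>1 b"
  then obtain g where "g \<in> E2" "q\<^sub>1 \<in> g" "b \<in> g \<inter> Q" "\<pi> b = \<beta>"
    using f(4) \<alpha>_ne_\<beta> unfolding chain_succ_def by auto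
  moreover have "g = f" using disjoint_member_unique[OF disjoint2] calculation f by blast
  ultimately show False using \<beta>_missing[OF f(1,2)] by blast
qed

lemma chain_succ_exists:
  assumes "a \<in> chain" "a \<noteq> q\<^sub>1"
  obtains b where "chain_succ a b" "b \<in> chain"
  using assms unfolding chain_def by (auto elim: converse_rtranclpE)

lemma chain_closed:
  assumes "a \<in> chain" "chain_succ a b \<or> chain_succ b a"
  shows "b \<in> chain"
  using assms(2)
proof
  assume ab: "chain_succ a b"
  then have "a \<noteq> q\<^sub>1" using no_chain_succ_q\<^sub>1 by blast
  with assms(1) obtain b' where "chain_succ a b'" "b' \<in> chain" by (rule chain_succ_exists)
  then show ?thesis using chain_succ_unique[OF ab] by simp
next
  assume "chain_succ b a"
  with assms(1) show ?thesis unfolding chain_def by (simp add: converse_rtranclp_into_rtranclp)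
qed

lemma chain_color:
  assumes "a \<in> chain"
  shows "\<pi> a \<in> {\<alpha>, \<beta>}"
proof (cases "a = q\<^sub>1")
  case False
  with assms obtain b where "chain_succ a b" by (rule chain_succ_exists)
  then show ?thesis unfolding chain_succ_def by auto
qed (simp add: f(4))

lemma same_edge_chain_succ:
  assumes "g \<in> E1 \<union> E2" "a \<in> g \<inter> Q" "b \<in> g \<inter> Q" "\<pi> a = \<alpha>" "\<pi> b = \<beta>"
  shows "chain_succ a b \<or> chain_succ b a"
  using assms unfolding chain_succ_def by blast

lemma recolored_rainbow: "rainbow_coloring_on (E1 \<union> E2) w Q recolored"
  unfolding recolored_def
proof (rule rainbow_coloring_on_transpose[OF col \<alpha>_less \<beta>_less])
  fix g a b assume g: "g \<in> E1 \<union> E2" and ab: "a \<in> g \<inter> Q" "b \<in> g \<inter> Q" "a \<in> chain"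
    and colors: "\<pi> a \<in> {\<alpha>, \<beta>}" "\<pi> b \<in> {\<alpha>, \<beta>}"
  show "b \<in> chain"
  proof (cases "a = b")
    case False
    then have "\<pi> a \<noteq> \<pi> b" using same_edge_same_color[OF g ab(1,2)] by blast
    with colors consider "\<pi> a = \<alpha>" "\<pi> b = \<beta>" | "\<pi> a = \<beta>" "\<pi> b = \<alpha>" by auto
    then have "chain_succ a b \<or> chain_succ b a"
      using same_edge_chain_succ[OF g ab(1,2)] same_edge_chain_succ[OF g ab(2,1)] by cases blast+
    then show ?thesis using chain_closed ab(3) by blast
  qed (use ab in simp)
qed

lemma recolored_missing:
  assumes g: "g \<in> E1 \<union> E2" "p \<in> g"
  shows "\<alpha> \<notin> recolored ` (g \<inter> Q)"
proof
  assume "\<alpha> \<in> recolored ` (g \<inter> Q)"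
  then obtain c where c: "c \<in> g \<inter> Q" "recolored c = \<alpha>" by (metis imageE)
  show False
  proof (cases "c \<in> chain")
    case True
    then have "\<pi> c = \<beta>" using c(2) chain_color[OF True] \<alpha>_ne_\<beta> by (auto simp: recolored_def)
    show False
    proof (cases "g \<in> E1")
      case True
      have "c \<noteq> q\<^sub>1" using \<open>\<pi> c = \<beta>\<close> f(4) \<alpha>_ne_\<beta> by auto
      with \<open>c \<in> chain\<close> obtain d where "chain_succ c d" by (rule chain_succ_exists)
      then obtain g' where "g' \<in> E1" "c \<in> g'" "d \<in> g' \<inter> Q" "\<pi> d = \<alpha>"
        using \<open>\<pi> c = \<beta>\<close> \<alpha>_ne_\<beta> unfolding chain_succ_def by auto
      moreover have "g' = g"
        using disjoint_member_unique[OF disjoint1 calculation(1) True calculation(2)] c(1) by blast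
      ultimately have "\<alpha> \<in> \<pi> ` (g \<inter> Q)" by (metis rev_image_eqI)
      then show False using \<alpha>_missing[OF True g(2)] by contradiction
    next
      case False
      then have "\<beta> \<in> \<pi> ` (g \<inter> Q)" using c(1) \<open>\<pi> c = \<beta>\<close> by (metis rev_image_eqI)
      then show False using \<beta>_missing[of g] g False by blast
    qed
  next
    case False
    then have "\<pi> c = \<alpha>" using c(2) by (simp add: recolored_def)
    show False
    proof (cases "g \<in> E1")
      case True
      have "\<alpha> \<in> \<pi> ` (g \<inter> Q)" using c(1) \<open>\<pi> c = \<alpha>\<close> by (metis rev_image_eqI)
      then show False using \<alpha>_missing[OF True g(2)] by contradiction
    next
      case False
      then have "g = f" using disjoint_member_unique[OF disjoint2 _ f(1) g(2) f(2)] g by blast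
      then have "c = q\<^sub>1" using same_edge_same_color[of f c q\<^sub>1] f c(1) \<open>\<pi> c = \<alpha>\<close> by simp
      then show False using \<open>c \<notin> chain\<close> by (simp add: chain_def)
    qed
  qed
qed

lemma rainbow_coloring_on_insert_recolored:
  assumes "p \<notin> Q"
  shows "rainbow_coloring_on (E1 \<union> E2) w (insert p Q) (recolored(p := \<alpha>))"
  using rainbow_coloring_on_insert[OF recolored_rainbow \<alpha>_less assms] recolored_missing by blast

end

lemma rainbow_coloring_on_two_matchings_insert:
  assumes "disjoint E1" "disjoint E2" and edges: "\<And>g. g \<in> E1 \<union> E2 \<Longrightarrow> finite g \<and> card g \<le> w"
    and "0 < w" and col: "rainbow_coloring_on (E1 \<union> E2) w Q \<pi>" and "p \<notin> Q"
  shows "\<exists>\<pi>'. rainbow_coloring_on (E1 \<union> E2) w (insert p Q) \<pi>'"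
proof -
  obtain \<alpha> where \<alpha>: "\<alpha> < w" "\<And>g. g \<in> E1 \<Longrightarrow> p \<in> g \<Longrightarrow> \<alpha> \<notin> \<pi> ` (g \<inter> Q)"
    using exists_missing_color[OF \<open>disjoint E1\<close> _ \<open>0 < w\<close> \<open>p \<notin> Q\<close>] edges by blast
  obtain \<beta> where \<beta>: "\<beta> < w" "\<And>g. g \<in> E2 \<Longrightarrow> p \<in> g \<Longrightarrow> \<beta> \<notin> \<pi> ` (g \<inter> Q)"
    using exists_missing_color[OF \<open>disjoint E2\<close> _ \<open>0 < w\<close> \<open>p \<notin> Q\<close>] edges by blast
  show ?thesis
  proof (cases "\<exists>f\<in>E2. p \<in> f \<and> \<alpha> \<in> \<pi> ` (f \<inter> Q)")
    case False
    then show ?thesis using rainbow_coloring_on_insert[OF col \<alpha>(1) \<open>p \<notin> Q\<close>] \<alpha>(2) by blast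
  next
    case True
    then obtain f q\<^sub>1 where "f \<in> E2" "p \<in> f" "q\<^sub>1 \<in> f \<inter> Q" "\<pi> q\<^sub>1 = \<alpha>" by auto
    then interpret kempe_chain E1 E2 w Q \<pi> p q\<^sub>1 f \<alpha> \<beta>
      using assms \<alpha> \<beta> by unfold_locales auto
    show ?thesis using rainbow_coloring_on_insert_recolored[OF \<open>p \<notin> Q\<close>] by blast
  qed
qed

lemma exists_rainbow_coloring_two_matchings:
  assumes "disjoint E1" "disjoint E2" "\<And>g. g \<in> E1 \<union> E2 \<Longrightarrow> finite g \<and> card g \<le> w"
    and "0 < w" and "finite (\<Union>(E1 \<union> E2))"
  shows "\<exists>\<pi>. \<forall>g\<in>E1 \<union> E2. inj_on \<pi> g \<and> \<pi> ` g \<subseteq> {..<w}"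
proof -
  have "\<exists>\<pi>. rainbow_coloring_on (E1 \<union> E2) w Q \<pi>" if "finite Q" for Q
    using that
  proof (induction Q rule: finite_induct)
    case empty
    then show ?case using rainbow_coloring_on_empty by blast
  next
    case (insert p Q)
    then show ?case using rainbow_coloring_on_two_matchings_insert[OF assms(1-4)] by blast
  qed
  then obtain \<pi> where "rainbow_coloring_on (E1 \<union> E2) w (\<Union>(E1 \<union> E2)) \<pi>"
    using assms(5) by blast
  moreover have "g \<inter> \<Union>(E1 \<union> E2) = g" if "g \<in> E1 \<union> E2" for g
    using that by blast
  ultimately show ?thesis unfolding rainbow_coloring_on_def by metis
qed

section \<open>Optimal codes from a 2-good colouring\<close>

locale good_2_coloring =
  fixes n w :: nat and F :: "nat \<Rightarrow> nat \<Rightarrow> nat set set"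
  assumes good: "good_coloring n w 2 F" and w_pos: "0 < w" and w_le_n: "w \<le> n"
begin

definition classes :: "nat set" where
  "classes = {1..(n choose w) div (n div w) div 2}"

lemma coloring_facts:
  shows coloring_cover: "(\<Union>i\<in>classes. F i 1 \<union> F i 2) = complete_hypergraph n w"
    and coloring_disjoint: "\<And>i j i' j'. (i, j) \<in> classes \<times> {1, 2} \<Longrightarrow> (i', j') \<in> classes \<times> {1, 2} \<Longrightarrow>
           (i, j) \<noteq> (i', j') \<Longrightarrow> F i j \<inter> F i' j' = {}"
    and coloring_class: "\<And>i j. (i, j) \<in> classes \<times> {1, 2} \<Longrightarrow>
           card (F i j) = n div w \<and> almost_regular n (F i j)"
    and coloring_packing: "\<And>i. i \<in> classes \<Longrightarrow> is_packing2 n (F i 1 \<union> F i 2)"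
proof -
  have two: "{1..2::nat} = {1, 2}" by auto
  note facts = good[unfolded good_coloring_def almost_regular_coloring_def Let_def two,
      folded classes_def]
  show "(\<Union>i\<in>classes. F i 1 \<union> F i 2) = complete_hypergraph n w"
    using facts by auto
  show "\<And>i j i' j'. (i, j) \<in> classes \<times> {1, 2} \<Longrightarrow> (i', j') \<in> classes \<times> {1, 2} \<Longrightarrow>
           (i, j) \<noteq> (i', j') \<Longrightarrow> F i j \<inter> F i' j' = {}"
    using facts by blast
  show "\<And>i j. (i, j) \<in> classes \<times> {1, 2} \<Longrightarrow> card (F i j) = n div w \<and> almost_regular n (F i j)"
    using facts by blast
  show "\<And>i. i \<in> classes \<Longrightarrow> is_packing2 n (F i 1 \<union> F i 2)"
    using facts by simp
qed

lemma class_edge: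
  assumes "i \<in> classes" "j \<in> {1, 2}" "e \<in> F i j"
  shows "e \<subseteq> {0..<n} \<and> card e = w"
proof -
  have "e \<in> complete_hypergraph n w" using coloring_cover assms by blast
  then show ?thesis unfolding complete_hypergraph_def by simp
qed

lemma class_union_edge:
  "i \<in> classes \<Longrightarrow> e \<in> F i 1 \<union> F i 2 \<Longrightarrow> e \<subseteq> {0..<n} \<and> card e = w"
  using class_edge by blast

lemma class_unique:
  assumes "i \<in> classes" "i' \<in> classes" "j \<in> {1, 2}" "j' \<in> {1, 2}" "e \<in> F i j" "e \<in> F i' j'"
  shows "i = i' \<and> j = j'"
  using coloring_disjoint[of i j i' j'] assms by blast

lemma finite_class:
  assumes "i \<in> classes" "j \<in> {1, 2}"
  shows "finite (F i j)"
proof (rule finite_subset)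
  show "F i j \<subseteq> Pow {0..<n}" using class_edge[OF assms] by auto
qed simp

lemma disjoint_class:
  assumes "i \<in> classes" "j \<in> {1, 2}"
  shows "disjoint (F i j)"
proof (rule almost_regular_disjoint)
  show "e \<subseteq> {0..<n} \<and> card e = w" if "e \<in> F i j" for e
    using class_edge assms that by blast
  show "card (F i j) * w \<le> n" and "almost_regular n (F i j)"
    using coloring_class[of i j] assms by (simp_all add: div_times_less_eq_dividend)
qed

lemma exists_rainbow_classes:
  "\<exists>\<pi>. \<forall>i\<in>classes. \<forall>e\<in>F i 1 \<union> F i 2. bij_betw (\<pi> i) e {..<w}"
proof -
  have "\<forall>i\<in>classes. \<exists>\<pi>. \<forall>e\<in>F i 1 \<union> F i 2. bij_betw \<pi> e {..<w}"
  proof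
    fix i assume "i \<in> classes"
    have edges: "e \<subseteq> {0..<n} \<and> card e = w" if "e \<in> F i 1 \<union> F i 2" for e
      using class_edge \<open>i \<in> classes\<close> that by blast
    have "\<exists>\<pi>. \<forall>e\<in>F i 1 \<union> F i 2. inj_on \<pi> e \<and> \<pi> ` e \<subseteq> {..<w}"
    proof (rule exists_rainbow_coloring_two_matchings)
      show "disjoint (F i 1)" "disjoint (F i 2)" using disjoint_class \<open>i \<in> classes\<close> by simp_all
      show "finite g \<and> card g \<le> w" if "g \<in> F i 1 \<union> F i 2" for g
        using edges[OF that] finite_subset by auto
      show "finite (\<Union>(F i 1 \<union> F i 2))"
        using edges by (meson Sup_le_iff finite_atLeastLessThan finite_subset)
    qed (rule w_pos)
    then obtain \<pi> where \<pi>: "\<And>e. e \<in> F i 1 \<union> F i 2 \<Longrightarrow> inj_on \<pi> e \<and> \<pi> ` e \<subseteq> {..<w}"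
      by blast
    have "bij_betw \<pi> e {..<w}" if "e \<in> F i 1 \<union> F i 2" for e
    proof -
      have "card (\<pi> ` e) = card {..<w}" using \<pi>[OF that] edges[OF that] by (simp add: card_image)
      then show ?thesis using \<pi>[OF that] by (simp add: bij_betw_def card_subset_eq)
    qed
    then show "\<exists>\<pi>. \<forall>e\<in>F i 1 \<union> F i 2. bij_betw \<pi> e {..<w}" by blast
  qed
  then show ?thesis by (rule bchoice)
qed

end

locale rainbow_good_2_coloring = good_2_coloring +
  fixes \<pi> :: "nat \<Rightarrow> nat \<Rightarrow> nat"
  assumes rainbow: "i \<in> classes \<Longrightarrow> e \<in> F i 1 \<union> F i 2 \<Longrightarrow> bij_betw (\<pi> i) e {..<w}"
begin

definition patterns :: "(nat \<Rightarrow> nat) set" where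
  "patterns = {..<w} \<rightarrow>\<^sub>E {1, 2}"

(* Edges of the second colour class carry the complementary pattern 3 - k, so two edges of a class
   that meet get different symbols at their common point. *)
definition edge_word :: "nat \<Rightarrow> (nat \<Rightarrow> nat) \<Rightarrow> nat set \<Rightarrow> nat \<Rightarrow> nat" where
  "edge_word i k e p = (if p \<notin> e then 0 else if e \<in> F i 2 then 3 - k (\<pi> i p) else k (\<pi> i p))"

definition code :: "nat \<Rightarrow> (nat \<Rightarrow> nat) \<Rightarrow> (nat \<Rightarrow> nat) set" where
  "code i k = edge_word i k ` (F i 1 \<union> F i 2)"

definition codes :: "(nat \<Rightarrow> nat) set set" where
  "codes = (\<lambda>(i, k). code i k) ` (classes \<times> patterns)"

lemma pattern_value: "k \<in> patterns \<Longrightarrow> c < w \<Longrightarrow> k c \<in> {1, 2}"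
  unfolding patterns_def by auto

lemma edge_word_value:
  assumes "i \<in> classes" "e \<in> F i 1 \<union> F i 2" "k \<in> patterns" "p \<in> e"
  shows "edge_word i k e p \<in> {1, 2}"
proof -
  have "\<pi> i p < w" using rainbow[OF assms(1,2)] assms(4) by (auto simp: bij_betw_def)
  then have "k (\<pi> i p) \<in> {1, 2}" by (rule pattern_value[OF assms(3)])
  then show ?thesis using assms(4) by (auto simp: edge_word_def)
qed

lemma edge_word_outside: "p \<notin> e \<Longrightarrow> edge_word i k e p = 0"
  by (simp add: edge_word_def)

lemma support_edge_word:
  assumes "i \<in> classes" "e \<in> F i 1 \<union> F i 2" "k \<in> patterns"
  shows "{p. p < n \<and> edge_word i k e p \<noteq> 0} = e"
  using edge_word_value[OF assms] class_union_edge[OF assms(1,2)] by (force simp: edge_word_def)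

lemma edge_word_in_Hq:
  assumes "i \<in> classes" "e \<in> F i 1 \<union> F i 2" "k \<in> patterns"
  shows "edge_word i k e \<in> Hq 3 n w"
  using edge_word_value[OF assms] class_union_edge[OF assms(1,2)] support_edge_word[OF assms]
  unfolding Hq_def by (force simp: edge_word_def)

lemma edge_word_inj:
  assumes "i \<in> classes" "e \<in> F i 1 \<union> F i 2" "k \<in> patterns"
    and "i' \<in> classes" "e' \<in> F i' 1 \<union> F i' 2" "k' \<in> patterns"
    and eq: "edge_word i k e = edge_word i' k' e'"
  shows "i = i' \<and> e = e' \<and> k = k'"
proof -
  have "e = e'"
    using support_edge_word[OF assms(1-3)] support_edge_word[OF assms(4-6)] eq by simp
  moreover have "i = i'"
    using class_unique[OF assms(1,4)] assms(2,5) \<open>e = e'\<close> by blast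
  moreover have "k = k'"
  proof (rule PiE_ext)
    show "k \<in> {..<w} \<rightarrow>\<^sub>E {1, 2}" "k' \<in> {..<w} \<rightarrow>\<^sub>E {1, 2}"
      using assms(3,6) unfolding patterns_def by simp_all
    fix c assume "c \<in> {..<w}"
    then have "c \<in> \<pi> i ` e" using rainbow[OF assms(1,2)] by (simp add: bij_betw_imp_surj_on)
    then obtain p where "p \<in> e" "\<pi> i p = c" by blast
    moreover have "edge_word i k e p = edge_word i k' e p"
      using eq \<open>e = e'\<close> \<open>i = i'\<close> by simp
    moreover have "k c \<in> {1, 2}" "k' c \<in> {1, 2}"
      using pattern_value assms(3,6) \<open>c \<in> {..<w}\<close> by auto
    ultimately show "k c = k' c" by (auto simp: edge_word_def split: if_splits)
  qed
  ultimately show ?thesis by blast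
qed

lemma meeting_edges_flip:
  assumes "i \<in> classes" "e \<in> F i 1 \<union> F i 2" "e' \<in> F i 1 \<union> F i 2" "e \<noteq> e'" "p \<in> e" "p \<in> e'"
  shows "e \<in> F i 2 \<longleftrightarrow> e' \<notin> F i 2"
proof -
  have "e \<notin> F i j \<or> e' \<notin> F i j" if "j \<in> {1, 2}" for j
    using disjoint_member_unique[OF disjoint_class[OF assms(1) that]] assms(4-6) by blast
  moreover have "F i 1 \<inter> F i 2 = {}" using coloring_disjoint[of i 1 i 2] assms(1) by simp
  ultimately show ?thesis using assms(2,3) by blast
qed

lemma hamming_edge_words:
  assumes "i \<in> classes" "e \<in> F i 1 \<union> F i 2" "e' \<in> F i 1 \<union> F i 2" "e \<noteq> e'" "k \<in> patterns"
  shows "2 * w - 1 \<le> hamming n (edge_word i k e) (edge_word i k e')"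
proof -
  have differ: "edge_word i k e p \<noteq> edge_word i k e' p" if "p \<in> e \<union> e'" for p
  proof (cases "p \<in> e \<inter> e'")
    case True
    then have "k (\<pi> i p) \<in> {1, 2}"
      using rainbow[OF assms(1,2)] pattern_value[OF assms(5)] by (auto simp: bij_betw_def)
    then show ?thesis
      using meeting_edges_flip[OF assms(1-4)] True by (auto simp: edge_word_def)
  next
    case False
    then show ?thesis
      using that edge_word_value[OF assms(1,2,5)] edge_word_value[OF assms(1,3,5)] edge_word_outside
      by fastforce
  qed
  have fin: "finite e" "finite e'" and card: "card e = w" "card e' = w" and "e \<subseteq> {0..<n}" "e' \<subseteq> {0..<n}"
    using class_union_edge[OF assms(1,2)] class_union_edge[OF assms(1,3)] finite_subset by auto
  have "card (e \<inter> e') \<le> 1"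
    using packing_card_Int_le_1[OF coloring_packing[OF assms(1)]] finite_class assms(1-4) \<open>e \<subseteq> {0..<n}\<close>
    by blast
  then have "2 * w - 1 \<le> card (e \<union> e')" using card_Un_Int[OF fin] card by linarith
  also have "\<dots> \<le> hamming n (edge_word i k e) (edge_word i k e')"
    unfolding hamming_def using differ \<open>e \<subseteq> {0..<n}\<close> \<open>e' \<subseteq> {0..<n}\<close> by (intro card_mono) auto
  finally show ?thesis .
qed

lemma card_code:
  assumes "i \<in> classes" "k \<in> patterns"
  shows "card (code i k) = 2 * (n div w)"
proof -
  have "inj_on (edge_word i k) (F i 1 \<union> F i 2)"
    using edge_word_inj assms by (intro inj_onI) blast
  then have "card (code i k) = card (F i 1 \<union> F i 2)"
    unfolding code_def by (rule card_image)
  also have "\<dots> = card (F i 1) + card (F i 2)"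
    using finite_class coloring_disjoint[of i 1 i 2] assms(1) by (intro card_Un_disjoint) auto
  also have "\<dots> = 2 * (n div w)"
    using coloring_class[of i 1] coloring_class[of i 2] assms(1) by simp
  finally show ?thesis .
qed

lemma code_is_code:
  assumes "i \<in> classes" "k \<in> patterns"
  shows "is_code 3 n (2 * w - 1) w (code i k)"
  unfolding is_code_def
proof (intro conjI ballI impI)
  have "0 < n div w" using w_pos w_le_n by (simp add: div_greater_zero_iff)
  then show "code i k \<noteq> {}" using card_code[OF assms] by fastforce
  show "code i k \<subseteq> Hq 3 n w"
    using edge_word_in_Hq assms unfolding code_def by blast
  fix x y assume "x \<in> code i k" "y \<in> code i k" "x \<noteq> y"
  then show "2 * w - 1 \<le> hamming n x y"
    using hamming_edge_words assms unfolding code_def by blast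
qed

lemma code_optimal:
  assumes "2 * (n mod w) < w" "i \<in> classes" "k \<in> patterns"
  shows "optimal_code 3 n (2 * w - 1) w (code i k)"
proof -
  have "card C \<le> 2 * (n div w)" if "is_code 3 n (2 * w - 1) w C" for C
  proof -
    have "w * card C \<le> 2 * n" using card_code_le[OF that w_pos] by simp
    moreover have "n = w * (n div w) + n mod w" by simp
    moreover have "w * (2 * (n div w) + 1) = 2 * (w * (n div w)) + w" by (simp add: algebra_simps)
    ultimately have "w * card C < w * (2 * (n div w) + 1)" using assms(1) by linarith
    then have "card C < 2 * (n div w) + 1" by (simp only: mult_less_cancel1)
    then show ?thesis by simp
  qed
  then have "Aq 3 n (2 * w - 1) w = card (code i k)"
    using Aq_eqI[OF code_is_code[OF assms(2,3)]] card_code[OF assms(2,3)] by simp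
  then show ?thesis using code_is_code[OF assms(2,3)] unfolding optimal_code_def by simp
qed

lemma Hq_subset_codes:
  assumes "x \<in> Hq 3 n w"
  obtains i k where "i \<in> classes" "k \<in> patterns" "x \<in> code i k"
proof -
  define S where "S = {p. p < n \<and> x p \<noteq> 0}"
  have "S \<in> complete_hypergraph n w"
    using support_Hq(1)[OF assms] unfolding S_def complete_hypergraph_def by auto
  then obtain i where i: "i \<in> classes" "S \<in> F i 1 \<union> F i 2" using coloring_cover by blast
  let ?\<iota> = "the_inv_into S (\<pi> i)"
  have bij: "bij_betw (\<pi> i) S {..<w}" using rainbow[OF i] .
  have symbols: "x p \<in> {1, 2}" if "p \<in> S" for p
    using that support_Hq(2)[OF assms, of p] unfolding S_def by auto
  define k where "k = restrict (\<lambda>c. if S \<in> F i 2 then 3 - x (?\<iota> c) else x (?\<iota> c)) {..<w}"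
  have "?\<iota> c \<in> S" if "c < w" for c
    using bij that by (auto intro: the_inv_into_into simp: bij_betw_def)
  then have "k \<in> patterns" unfolding k_def patterns_def using symbols by force
  have "edge_word i k S = x"
  proof
    fix p show "edge_word i k S p = x p"
    proof (cases "p \<in> S")
      case True
      then have "\<pi> i p < w" "?\<iota> (\<pi> i p) = p"
        using bij by (auto simp: bij_betw_def the_inv_into_f_f)
      then show ?thesis using True symbols[OF True] by (auto simp: edge_word_def k_def)
    next
      case False
      then have "x p = 0" using support_Hq(3)[OF assms, of p] unfolding S_def by fastforce
      then show ?thesis using False by (simp add: edge_word_outside)
    qed
  qed
  then show thesis using that[OF i(1) \<open>k \<in> patterns\<close>] i(2) unfolding code_def by blast
qed

lemma is_TOC_codes:
  assumes "2 * (n mod w) < w"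
  shows "is_TOC 3 n (2 * w - 1) w codes"
  unfolding is_TOC_def
proof
  show "\<forall>C\<in>codes. optimal_code 3 n (2 * w - 1) w C"
    using code_optimal[OF assms] unfolding codes_def by auto
  show "partition_on (Hq 3 n w) codes"
  proof (rule partition_onI)
    show "\<Union>codes = Hq 3 n w"
    proof
      show "\<Union>codes \<subseteq> Hq 3 n w"
        using code_is_code unfolding codes_def is_code_def by blast
      show "Hq 3 n w \<subseteq> \<Union>codes"
      proof
        fix x assume "x \<in> Hq 3 n w"
        then obtain i k where "i \<in> classes" "k \<in> patterns" "x \<in> code i k"
          by (rule Hq_subset_codes)
        then show "x \<in> \<Union>codes" unfolding codes_def by blast
      qed
    qed
    show "{} \<notin> codes"
      using code_is_code unfolding codes_def is_code_def by fastforce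
    fix C C' assume "C \<in> codes" "C' \<in> codes" "C \<noteq> C'"
    then obtain i k i' k' where "i \<in> classes" "k \<in> patterns" "C = code i k"
      "i' \<in> classes" "k' \<in> patterns" "C' = code i' k'"
      unfolding codes_def by blast
    then show "disjnt C C'"
      using edge_word_inj \<open>C \<noteq> C'\<close> unfolding disjnt_def code_def by blast
  qed
qed

end

theorem theorem3p3:
  fixes n w a :: nat
  assumes "0 < w" and "w \<le> n"
    and "(n div w) dvd (n choose w)"
    and "even ((n choose w) div (n div w))"
    and "a = n mod w" and "2 * a < w"
    and "\<exists>F. good_coloring n w 2 F"
  shows "\<exists>P. is_TOC 3 n (2 * w - 1) w P"
proof -
  obtain F where "good_coloring n w 2 F" using assms(7) by blast
  then interpret good_2_coloring n w F using assms(1,2) by unfold_locales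
  obtain \<pi> where "\<And>i e. i \<in> classes \<Longrightarrow> e \<in> F i 1 \<union> F i 2 \<Longrightarrow> bij_betw (\<pi> i) e {..<w}"
    using exists_rainbow_classes by blast
  then interpret rainbow_good_2_coloring n w F \<pi> by unfold_locales
  show ?thesis using is_TOC_codes assms(5,6) by blast
qed

end
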